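(* Let $(\Omega,\mathcal{F},P)$ be a complete probability space with a filtration $\mathbb{F}=(\mathcal{F}_t)_{t\ge0}$ satisfying the usual hypotheses, and let $S,T$ be $\mathbb{F}$-stopping times such that $\mathbb{F}$ jumps locally from $S$ to $T$, i.e. $\mathcal{F}_t\cap\{S\le t<T\}=\mathcal{F}_S\cap\{S\le t<T\}$ for all $t\ge0$. Then every uniformly integrable $\mathbb{F}$-martingale $M$ is a.s. of finite variation on $(S,T]$. In particular, for any positive random variable $\tau$, the càdlàg version of $Z_t=E\{1_{\{\tau>t\}}\mid\mathcal{F}_t\}$ is a.s. of finite variation on $(S,T]$.
   Context: $(S,T]:=\emptyset$ on $\{S\ge T\}$. For a $\sigma$-field $\mathcal{H}$ and event $C$, $\mathcal{H}\cap C=\{B\cap C:B\in\mathcal{H}\}$. *)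

theory Defs
  imports "HOL-Probability.Probability"
begin

text \<open>Time is continuous: the time index set is [0,\<infinity>) \<subseteq> real; values of processes and
  filtrations at negative times are irrelevant. Stopping times take values in [0,\<infinity>] (ennreal).\<close>

definition complete_space_measure :: "'a measure \<Rightarrow> bool" where
  "complete_space_measure M \<longleftrightarrow> (\<forall>A B. B \<in> null_sets M \<longrightarrow> A \<subseteq> B \<longrightarrow> A \<in> sets M)"

definition filtration_on :: "'a measure \<Rightarrow> (real \<Rightarrow> 'a measure) \<Rightarrow> bool" where
  "filtration_on M F \<longleftrightarrow> (\<forall>t\<ge>0. subalgebra M (F t)) \<and>
     (\<forall>s t. 0 \<le> s \<longrightarrow> s \<le> t \<longrightarrow> sets (F s) \<subseteq> sets (F t))"

definition usual_hypotheses :: "'a measure \<Rightarrow> (real \<Rightarrow> 'a measure) \<Rightarrow> bool" where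
  "usual_hypotheses M F \<longleftrightarrow> complete_space_measure M \<and> filtration_on M F \<and>
     null_sets M \<subseteq> sets (F 0) \<and>
     (\<forall>t\<ge>0. sets (F t) = (\<Inter>s\<in>{t<..}. sets (F s)))"

definition is_stopping_time :: "'a measure \<Rightarrow> (real \<Rightarrow> 'a measure) \<Rightarrow> ('a \<Rightarrow> ennreal) \<Rightarrow> bool" where
  "is_stopping_time M F S \<longleftrightarrow> (\<forall>t\<ge>0. {\<omega>\<in>space M. S \<omega> \<le> ennreal t} \<in> sets (F t))"

definition sets_at_stopping_time :: "'a measure \<Rightarrow> (real \<Rightarrow> 'a measure) \<Rightarrow> ('a \<Rightarrow> ennreal) \<Rightarrow> 'a set set" where
  "sets_at_stopping_time M F S =
     {A \<in> sets M. \<forall>t\<ge>0. A \<inter> {\<omega>\<in>space M. S \<omega> \<le> ennreal t} \<in> sets (F t)}"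

definition trace_sets :: "'a set set \<Rightarrow> 'a set \<Rightarrow> 'a set set" where
  "trace_sets H C = {B \<inter> C | B. B \<in> H}"

definition jumps_locally :: "'a measure \<Rightarrow> (real \<Rightarrow> 'a measure) \<Rightarrow> ('a \<Rightarrow> ennreal) \<Rightarrow> ('a \<Rightarrow> ennreal) \<Rightarrow> bool" where
  "jumps_locally M F S T \<longleftrightarrow> (\<forall>t\<ge>0.
     trace_sets (sets (F t)) {\<omega>\<in>space M. S \<omega> \<le> ennreal t \<and> ennreal t < T \<omega>} =
     trace_sets (sets_at_stopping_time M F S) {\<omega>\<in>space M. S \<omega> \<le> ennreal t \<and> ennreal t < T \<omega>})"

definition martingale :: "'a measure \<Rightarrow> (real \<Rightarrow> 'a measure) \<Rightarrow> (real \<Rightarrow> 'a \<Rightarrow> real) \<Rightarrow> bool" where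
  "martingale M F X \<longleftrightarrow>
     (\<forall>t\<ge>0. X t \<in> borel_measurable (F t) \<and> integrable M (X t)) \<and>
     (\<forall>s t. 0 \<le> s \<longrightarrow> s \<le> t \<longrightarrow> (AE \<omega> in M. real_cond_exp M (F s) (X t) \<omega> = X s \<omega>))"

definition uniformly_integrable :: "'a measure \<Rightarrow> (real \<Rightarrow> 'a \<Rightarrow> real) \<Rightarrow> bool" where
  "uniformly_integrable M X \<longleftrightarrow> (\<forall>e>0. \<exists>c. \<forall>t\<ge>0.
     integral\<^sup>L M (\<lambda>\<omega>. if c < \<bar>X t \<omega>\<bar> then \<bar>X t \<omega>\<bar> else 0) \<le> e)"

definition cadlag :: "(real \<Rightarrow> real) \<Rightarrow> bool" where
  "cadlag f \<longleftrightarrow> (\<forall>t\<ge>0. (f \<longlongrightarrow> f t) (at_right t)) \<and> (\<forall>t>0. \<exists>l. (f \<longlongrightarrow> l) (at_left t))"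

definition finite_variation_on :: "(real \<Rightarrow> real) \<Rightarrow> real set \<Rightarrow> bool" where
  "finite_variation_on f I \<longleftrightarrow> (\<exists>B. \<forall>xs. sorted xs \<longrightarrow> set xs \<subseteq> I \<longrightarrow>
     (\<Sum>i<length xs - 1. \<bar>f (xs ! Suc i) - f (xs ! i)\<bar>) \<le> B)"

definition stoch_interval_oc :: "('a \<Rightarrow> ennreal) \<Rightarrow> ('a \<Rightarrow> ennreal) \<Rightarrow> 'a \<Rightarrow> real set" where
  "stoch_interval_oc S T \<omega> = {t. 0 \<le> t \<and> S \<omega> < ennreal t \<and> ennreal t \<le> T \<omega>}"

text \<open>A process is (a.s.) of finite variation on (S,T]: almost every path has finite variation
  on (S,T] \<inter> [0,u] for every u \<ge> 0 (i.e. 1_{(S,T]}\<cdot>X is a finite-variation process).\<close>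
definition fv_on_stoch_interval :: "'a measure \<Rightarrow> (real \<Rightarrow> 'a \<Rightarrow> real) \<Rightarrow> ('a \<Rightarrow> ennreal) \<Rightarrow> ('a \<Rightarrow> ennreal) \<Rightarrow> bool" where
  "fv_on_stoch_interval M X S T \<longleftrightarrow> (AE \<omega> in M. \<forall>u\<ge>0.
     finite_variation_on (\<lambda>t. X t \<omega>) (stoch_interval_oc S T \<omega> \<inter> {0..u}))"

end

theory Submission
  imports Defs
begin

text \<open>On the jump window \<open>{S \<le> t < T}\<close> the information of \<open>F t\<close> is that of \<open>F_S\<close>,
  so conditioning on \<open>F t\<close> there amounts to conditioning on \<open>F_S\<close> and on survival of \<open>T\<close>:
  \<open>E[Y | F t] = E[Y 1\<^bsub>T > t\<^esub> | F_S] / P(T > t | F_S)\<close>. For \<open>Y = X n\<^sup>+\<close> and \<open>Y = X n\<^sup>-\<close>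
  (resp. \<open>Y = 1\<^bsub>\<tau> > t\<^esub>\<close>) the numerators are antitone in \<open>t\<close>, and so is the denominator, which
  is bounded away from zero along the rational times of the window almost surely. A quotient of
  bounded antitone functions with denominator bounded below has finite variation; right
  continuity transfers this from rational times to all times in \<open>(S, T)\<close>, and the left limit
  at \<open>T\<close> adds the endpoint.\<close>

section \<open>Variation of real functions\<close>

definition variation_sum :: "(real \<Rightarrow> real) \<Rightarrow> real list \<Rightarrow> real" where
  "variation_sum f xs = (\<Sum>i<length xs - 1. \<bar>f (xs ! Suc i) - f (xs ! i)\<bar>)"

lemma finite_variation_on_iff_variation_sum:
  "finite_variation_on f I \<longleftrightarrow> (\<exists>B. \<forall>xs. sorted xs \<longrightarrow> set xs \<subseteq> I \<longrightarrow> variation_sum f xs \<le> B)"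
  by (simp add: finite_variation_on_def variation_sum_def)

lemma finite_variation_on_subset:
  "finite_variation_on f A \<Longrightarrow> B \<subseteq> A \<Longrightarrow> finite_variation_on f B"
  unfolding finite_variation_on_def by blast

lemma variation_sum_antimono_le:
  fixes g :: "real \<Rightarrow> real"
  assumes "sorted xs" "set xs \<subseteq> A"
    and antimono: "\<And>x y. x \<in> A \<Longrightarrow> y \<in> A \<Longrightarrow> x \<le> y \<Longrightarrow> g y \<le> g x"
    and range: "\<And>x. x \<in> A \<Longrightarrow> 0 \<le> g x \<and> g x \<le> c" and "0 \<le> c"
  shows "variation_sum g xs \<le> c"
proof (cases "xs = []")
  case True
  then show ?thesis using \<open>0 \<le> c\<close> by (simp add: variation_sum_def)
next
  case False
  have "variation_sum g xs = (\<Sum>i<length xs - 1. g (xs ! i) - g (xs ! Suc i))"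
    unfolding variation_sum_def
  proof (rule sum.cong)
    fix i assume "i \<in> {..<length xs - 1}"
    then have i: "Suc i < length xs" by auto
    then have "xs ! i \<in> A" "xs ! Suc i \<in> A" "xs ! i \<le> xs ! Suc i"
      using sorted_nth_mono[OF assms(1), of i "Suc i"] assms(2) by auto
    then have "g (xs ! Suc i) \<le> g (xs ! i)" by (rule antimono)
    then show "\<bar>g (xs ! Suc i) - g (xs ! i)\<bar> = g (xs ! i) - g (xs ! Suc i)" by simp
  qed simp
  also have "\<dots> = g (xs ! 0) - g (xs ! (length xs - 1))"
    by (rule sum_lessThan_telescope'[where f = "\<lambda>i. g (xs ! i)"])
  also have "\<dots> \<le> c"
  proof -
    have "xs ! 0 \<in> A" "xs ! (length xs - 1) \<in> A" using False assms(2) by auto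
    from range[OF this(1)] range[OF this(2)] show ?thesis by linarith
  qed
  finally show ?thesis .
qed

lemma abs_diff_quotients_le:
  fixes a1 a2 b a1' a2' b' e c :: real
  assumes "0 < e" "e \<le> b" "e \<le> b'" "\<bar>a1 - a2\<bar> \<le> c"
  shows "\<bar>(a1' - a2') / b' - (a1 - a2) / b\<bar>
     \<le> \<bar>a1' - a1\<bar> / e + \<bar>a2' - a2\<bar> / e + c / e\<^sup>2 * \<bar>b' - b\<bar>"
proof -
  have pos: "0 < b" "0 < b'" using assms by auto
  have split: "(a1' - a2') / b' - (a1 - a2) / b
      = ((a1' - a1) - (a2' - a2)) / b' + (a1 - a2) * (b - b') / (b * b')"
    using pos by (simp add: field_simps)
  have "\<bar>(a1' - a1) - (a2' - a2)\<bar> / b' \<le> (\<bar>a1' - a1\<bar> + \<bar>a2' - a2\<bar>) / b'"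
    using pos by (intro divide_right_mono) auto
  also have "\<dots> \<le> (\<bar>a1' - a1\<bar> + \<bar>a2' - a2\<bar>) / e"
    using assms by (intro divide_left_mono) auto
  finally have first: "\<bar>((a1' - a1) - (a2' - a2)) / b'\<bar> \<le> \<bar>a1' - a1\<bar> / e + \<bar>a2' - a2\<bar> / e"
    using pos by (simp add: add_divide_distrib)
  have "e\<^sup>2 \<le> b * b'" using assms by (simp add: power2_eq_square mult_mono)
  then have "\<bar>b - b'\<bar> / (b * b') \<le> \<bar>b' - b\<bar> / e\<^sup>2"
    using assms pos by (simp add: abs_minus_commute divide_left_mono)
  then have "\<bar>a1 - a2\<bar> * (\<bar>b - b'\<bar> / (b * b')) \<le> c * (\<bar>b' - b\<bar> / e\<^sup>2)"
    using assms by (intro mult_mono) auto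
  then have second: "\<bar>(a1 - a2) * (b - b') / (b * b')\<bar> \<le> c / e\<^sup>2 * \<bar>b' - b\<bar>"
    using pos by (simp add: abs_mult)
  show ?thesis
    unfolding split
    using first second abs_triangle_ineq[of "((a1' - a1) - (a2' - a2)) / b'" "(a1 - a2) * (b - b') / (b * b')"]
    by linarith
qed

lemma variation_sum_quotient_le:
  fixes f a1 a2 b :: "real \<Rightarrow> real"
  assumes "sorted xs" "set xs \<subseteq> R" "0 < e" "0 \<le> c1" "0 \<le> c2" "0 \<le> c3"
    and quotient: "\<And>q. q \<in> R \<Longrightarrow> f q = (a1 q - a2 q) / b q"
    and antimono: "\<And>q q'. q \<in> R \<Longrightarrow> q' \<in> R \<Longrightarrow> q \<le> q' \<Longrightarrow>
      a1 q' \<le> a1 q \<and> a2 q' \<le> a2 q \<and> b q' \<le> b q"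
    and range: "\<And>q. q \<in> R \<Longrightarrow>
      0 \<le> a1 q \<and> a1 q \<le> c1 \<and> 0 \<le> a2 q \<and> a2 q \<le> c2 \<and> e \<le> b q \<and> b q \<le> c3"
  shows "variation_sum f xs \<le> c1 / e + c2 / e + (c1 + c2) / e\<^sup>2 * c3"
proof -
  let ?K = "(c1 + c2) / e\<^sup>2"
  let ?d = "\<lambda>g i. \<bar>g (xs ! Suc i) - g (xs ! i)\<bar>"
  have "variation_sum f xs \<le> (\<Sum>i<length xs - 1. ?d a1 i / e + ?d a2 i / e + ?K * ?d b i)"
    unfolding variation_sum_def
  proof (rule sum_mono)
    fix i assume "i \<in> {..<length xs - 1}"
    then have R: "xs ! i \<in> R" "xs ! Suc i \<in> R" using assms(2) by auto
    then have "\<bar>a1 (xs ! i) - a2 (xs ! i)\<bar> \<le> c1 + c2" using range by force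
    from abs_diff_quotients_le[OF \<open>0 < e\<close> _ _ this, of "b (xs ! i)" "b (xs ! Suc i)"]
    show "?d f i \<le> ?d a1 i / e + ?d a2 i / e + ?K * ?d b i"
      using range[OF R(1)] range[OF R(2)] quotient[OF R(1)] quotient[OF R(2)] by simp
  qed
  also have "\<dots> = variation_sum a1 xs / e + variation_sum a2 xs / e + ?K * variation_sum b xs"
    by (simp add: variation_sum_def sum.distrib sum_divide_distrib sum_distrib_left)
  also have "\<dots> \<le> c1 / e + c2 / e + ?K * c3"
  proof -
    have "variation_sum a1 xs \<le> c1" "variation_sum a2 xs \<le> c2" "variation_sum b xs \<le> c3"
      using assms(1-6) antimono range
      by (auto intro!: variation_sum_antimono_le[where A = R] dest: range)
    moreover have "0 \<le> ?K" using assms(4,5) by simp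
    ultimately show ?thesis using \<open>0 < e\<close> by (intro add_mono divide_right_mono mult_left_mono) auto
  qed
  finally show ?thesis .
qed


lemma variation_sum_le_perturbed:
  assumes "length ys = length xs" and close: "\<And>i. i < length xs \<Longrightarrow> \<bar>f (xs ! i) - f (ys ! i)\<bar> \<le> \<eta>"
  shows "variation_sum f xs \<le> variation_sum f ys + 2 * \<eta> * real (length xs - 1)"
proof -
  have "variation_sum f xs \<le> (\<Sum>i<length xs - 1. \<bar>f (ys ! Suc i) - f (ys ! i)\<bar> + 2 * \<eta>)"
    unfolding variation_sum_def
  proof (rule sum_mono)
    fix i assume "i \<in> {..<length xs - 1}"
    then have "\<bar>f (xs ! i) - f (ys ! i)\<bar> \<le> \<eta>" "\<bar>f (xs ! Suc i) - f (ys ! Suc i)\<bar> \<le> \<eta>"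
      using close by auto
    then show "\<bar>f (xs ! Suc i) - f (xs ! i)\<bar> \<le> \<bar>f (ys ! Suc i) - f (ys ! i)\<bar> + 2 * \<eta>"
      by (simp add: abs_le_iff) linarith
  qed
  also have "\<dots> = variation_sum f ys + 2 * \<eta> * real (length xs - 1)"
    using assms(1) by (simp add: variation_sum_def sum.distrib)
  finally show ?thesis .
qed

lemma eventually_at_right_0_real: "0 < c \<Longrightarrow> (\<And>d. 0 < d \<Longrightarrow> d < c \<Longrightarrow> P d) \<Longrightarrow> eventually P (at_right (0::real))"
  unfolding eventually_at_right_field by (rule exI[of _ c]) auto

lemma sorted_map_shift:
  fixes g :: "real \<Rightarrow> real"
  assumes "sorted xs"
    and gaps: "\<And>x x'. x \<in> set xs \<Longrightarrow> x' \<in> set xs \<Longrightarrow> x < x' \<Longrightarrow> \<delta> \<le> x' - x"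
    and shift: "\<And>x. x \<in> set xs \<Longrightarrow> x \<le> g x \<and> g x < x + \<delta>"
  shows "sorted (map g xs)"
proof -
  have "g x \<le> g y" if "x \<in> set xs" "y \<in> set xs" "x \<le> y" for x y
  proof (cases "x = y")
    case False
    with that have "\<delta> \<le> y - x" using gaps by auto
    then show ?thesis using shift[OF that(1)] shift[OF that(2)] by auto
  qed simp
  then show ?thesis
    using \<open>sorted xs\<close> unfolding sorted_map by (rule sorted_wrt_mono_rel)
qed

text \<open>Shift each partition point slightly to the right into \<open>R\<close>, keeping the order.\<close>
lemma variation_sum_le_of_right_dense:
  fixes f :: "real \<Rightarrow> real"
  assumes right_cont: "\<And>x. x \<in> I \<Longrightarrow> (f \<longlongrightarrow> f x) (at_right x)"
    and dense: "\<And>x \<delta>. x \<in> I \<Longrightarrow> 0 < \<delta> \<Longrightarrow> \<exists>r\<in>R. x < r \<and> r < x + \<delta>"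
    and bound: "\<And>ys. sorted ys \<Longrightarrow> set ys \<subseteq> R \<Longrightarrow> variation_sum f ys \<le> V"
    and xs: "sorted xs" "set xs \<subseteq> I"
  shows "variation_sum f xs \<le> V"
proof (rule field_le_epsilon)
  fix \<epsilon> :: real assume "0 < \<epsilon>"
  define \<eta> where "\<eta> = \<epsilon> / (2 * (real (length xs) + 1))"
  have "0 < \<eta>" using \<open>0 < \<epsilon>\<close> unfolding \<eta>_def by simp
  have close: "\<forall>\<^sub>F d in at_right 0. \<forall>x\<in>set xs. \<forall>y. x < y \<and> y < x + d \<longrightarrow> \<bar>f y - f x\<bar> < \<eta>"
  proof (rule eventually_ball_finite, simp, rule ballI)
    fix x assume "x \<in> set xs"
    then have "x \<in> I" using xs(2) by auto
    from tendstoD[OF right_cont[OF this] \<open>0 < \<eta>\<close>]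
    obtain b where "x < b" "\<And>y. x < y \<Longrightarrow> y < b \<Longrightarrow> dist (f y) (f x) < \<eta>"
      unfolding eventually_at_right_field by blast
    then show "\<forall>\<^sub>F d in at_right 0. \<forall>y. x < y \<and> y < x + d \<longrightarrow> \<bar>f y - f x\<bar> < \<eta>"
      by (intro eventually_at_right_0_real[of "b - x"]) (auto simp: dist_real_def)
  qed
  have gaps: "\<forall>\<^sub>F d in at_right 0. \<forall>x\<in>set xs. \<forall>x'\<in>set xs. x < x' \<longrightarrow> d \<le> x' - x"
  proof (intro eventually_ball_finite ballI finite_set)
    fix x x' assume "x \<in> set xs" "x' \<in> set xs"
    show "\<forall>\<^sub>F d in at_right 0. x < x' \<longrightarrow> d \<le> x' - x"
      by (cases "x < x'") (auto intro: eventually_at_right_0_real[of "x' - x"])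
  qed
  have "\<forall>\<^sub>F d in at_right (0::real). 0 < d" by (rule eventually_at_right_0_real[of 1]) auto
  from eventually_happens[OF eventually_conj[OF this eventually_conj[OF close gaps]]]
  obtain \<delta> where "0 < \<delta>"
    and \<delta>_close: "\<And>x y. x \<in> set xs \<Longrightarrow> x < y \<Longrightarrow> y < x + \<delta> \<Longrightarrow> \<bar>f y - f x\<bar> < \<eta>"
    and \<delta>_gaps: "\<And>x x'. x \<in> set xs \<Longrightarrow> x' \<in> set xs \<Longrightarrow> x < x' \<Longrightarrow> \<delta> \<le> x' - x"
    by (auto simp: trivial_limit_at_right_real)
  define shift where "shift x = (SOME r. r \<in> R \<and> x < r \<and> r < x + \<delta>)" for x
  have shift: "shift x \<in> R \<and> x < shift x \<and> shift x < x + \<delta>" if "x \<in> set xs" for x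
  proof -
    have "\<exists>r. r \<in> R \<and> x < r \<and> r < x + \<delta>" using dense[of x \<delta>] that xs(2) \<open>0 < \<delta>\<close> by auto
    then show ?thesis unfolding shift_def by (rule someI_ex)
  qed
  define ys where "ys = map shift xs"
  have "sorted ys"
    unfolding ys_def using xs(1) \<delta>_gaps
  proof (rule sorted_map_shift)
    show "x \<le> shift x \<and> shift x < x + \<delta>" if "x \<in> set xs" for x using shift[OF that] by auto
  qed
  moreover have "set ys \<subseteq> R" using shift by (auto simp: ys_def)
  ultimately have "variation_sum f ys \<le> V" by (rule bound)
  moreover have "variation_sum f xs \<le> variation_sum f ys + 2 * \<eta> * real (length xs - 1)"
  proof (rule variation_sum_le_perturbed)
    fix i assume "i < length xs"
    then have "xs ! i \<in> set xs" "ys ! i = shift (xs ! i)" by (auto simp: ys_def)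
    then show "\<bar>f (xs ! i) - f (ys ! i)\<bar> \<le> \<eta>"
      using shift \<delta>_close[of "xs ! i" "ys ! i"] abs_minus_commute[of "f (xs ! i)"] by force
  qed (simp add: ys_def)
  moreover have "2 * \<eta> * real (length xs - 1) \<le> \<epsilon>"
  proof -
    have "2 * \<eta> * real (length xs - 1) \<le> 2 * \<eta> * (real (length xs) + 1)"
      using \<open>0 < \<eta>\<close> by (intro mult_left_mono) auto
    also have "\<dots> = \<epsilon>" unfolding \<eta>_def by (simp add: field_simps)
    finally show ?thesis .
  qed
  ultimately show "variation_sum f xs \<le> V + \<epsilon>" by linarith
qed


lemma variation_sum_replace_last:
  fixes f :: "real \<Rightarrow> real"
  assumes xs: "sorted xs" and below: "\<And>x. x \<in> set xs \<Longrightarrow> x \<le> t"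
  shows "variation_sum f xs \<le> variation_sum f (map (\<lambda>x. if x = t then y else x) xs) + \<bar>f t - f y\<bar>"
proof -
  define ys where "ys = map (\<lambda>x. if x = t then y else x) xs"
  define enters where "enters i \<longleftrightarrow> xs ! i \<noteq> t \<and> xs ! Suc i = t" for i
  have "variation_sum f xs \<le>
      (\<Sum>i<length xs - 1. \<bar>f (ys ! Suc i) - f (ys ! i)\<bar> + (if enters i then \<bar>f t - f y\<bar> else 0))"
    unfolding variation_sum_def
  proof (rule sum_mono)
    fix i assume "i \<in> {..<length xs - 1}"
    then have i: "Suc i < length xs" by auto
    then have "xs ! i \<le> xs ! Suc i" "xs ! Suc i \<le> t"
      using sorted_nth_mono[OF xs, of i "Suc i"] below[of "xs ! Suc i"] by auto
    then show "\<bar>f (xs ! Suc i) - f (xs ! i)\<bar>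
        \<le> \<bar>f (ys ! Suc i) - f (ys ! i)\<bar> + (if enters i then \<bar>f t - f y\<bar> else 0)"
      using i unfolding ys_def enters_def
      by (cases "xs ! i = t"; cases "xs ! Suc i = t") auto
  qed
  also have "\<dots> = variation_sum f ys + \<bar>f t - f y\<bar> * card {i\<in>{..<length xs - 1}. enters i}"
    by (simp add: variation_sum_def ys_def sum.distrib sum.inter_filter[symmetric] mult.commute)
  also have "\<dots> \<le> variation_sum f ys + \<bar>f t - f y\<bar> * 1"
  proof -
    have "i = j" if "i < length xs - 1" "j < length xs - 1" "enters i" "enters j" "i \<le> j" for i j
    proof (rule ccontr)
      assume "i \<noteq> j"
      then have "xs ! Suc i \<le> xs ! j" "xs ! j \<le> t"
        using that sorted_nth_mono[OF xs, of "Suc i" j] below[of "xs ! j"] by auto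
      then show False using that unfolding enters_def by auto
    qed
    then have "card {i\<in>{..<length xs - 1}. enters i} \<le> 1"
      unfolding card_le_Suc0_iff_eq[OF finite_subset[of _ "{..<length xs - 1}"]]
      by (auto simp: card_le_Suc0_iff_eq) (metis nle_le)
    then show ?thesis by (intro add_left_mono mult_left_mono) auto
  qed
  finally show ?thesis by (simp add: ys_def)
qed

lemma finite_variation_on_insert_left_limit:
  fixes f :: "real \<Rightarrow> real"
  assumes fv: "finite_variation_on f I" and lim: "(f \<longlongrightarrow> L) (at_left t)"
    and I: "I \<subseteq> {..<t}" "{a<..<t} \<subseteq> I" "a < t"
  shows "finite_variation_on f (insert t I)"
proof -
  obtain B where B: "\<And>xs. sorted xs \<Longrightarrow> set xs \<subseteq> I \<Longrightarrow> variation_sum f xs \<le> B"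
    using fv unfolding finite_variation_on_iff_variation_sum by blast
  have "variation_sum f xs \<le> B + (\<bar>f t - L\<bar> + 1)" if xs: "sorted xs" "set xs \<subseteq> insert t I" for xs
  proof -
    have near_L: "\<forall>\<^sub>F y in at_left t. dist (f y) L < 1" using tendstoD[OF lim] by simp
    have above: "\<forall>\<^sub>F y in at_left t. \<forall>x\<in>set xs. x < t \<longrightarrow> x < y"
      by (intro eventually_ball_finite ballI finite_set)
        (simp add: eventually_at_left_field, metis linorder_not_le order_refl)
    have inside: "\<forall>\<^sub>F y in at_left t. a < y \<and> y < t"
      using \<open>a < t\<close> by (auto simp: eventually_at_left_field intro!: exI[of _ a])
    from eventually_happens[OF eventually_conj[OF near_L eventually_conj[OF above inside]]]
    obtain y where y: "dist (f y) L < 1" "\<And>x. x \<in> set xs \<Longrightarrow> x < t \<Longrightarrow> x < y"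
      "a < y" "y < t"
      by (auto simp: trivial_limit_at_left_real)
    define ys where "ys = map (\<lambda>x. if x = t then y else x) xs"
    have below: "\<And>x. x \<in> set xs \<Longrightarrow> x \<le> t" using xs(2) I(1) by force
    have "sorted ys" unfolding sorted_iff_nth_mono
    proof (intro allI impI)
      fix i j assume "i \<le> j" "j < length ys"
      then have "xs ! i \<le> xs ! j" "xs ! i \<in> set xs" "xs ! j \<in> set xs"
        using sorted_nth_mono[OF xs(1)] by (auto simp: ys_def)
      moreover have "ys ! i = (if xs ! i = t then y else xs ! i)" "ys ! j = (if xs ! j = t then y else xs ! j)"
        using \<open>i \<le> j\<close> \<open>j < length ys\<close> by (auto simp: ys_def)
      ultimately show "ys ! i \<le> ys ! j"
        using below[of "xs ! i"] below[of "xs ! j"] y(2)[of "xs ! i"] y(4) by auto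
    qed
    moreover have "set ys \<subseteq> I" using xs(2) y(3,4) I(2) by (auto simp: ys_def)
    ultimately have "variation_sum f ys \<le> B" by (rule B)
    moreover have "\<bar>f t - f y\<bar> \<le> \<bar>f t - L\<bar> + 1" using y(1) by (simp add: dist_real_def)
    ultimately show ?thesis
      using variation_sum_replace_last[OF xs(1) below, of f y] by (simp add: ys_def)
  qed
  then show ?thesis unfolding finite_variation_on_iff_variation_sum by blast
qed


lemma rat_between_in_stoch_interval:
  fixes s T :: ennreal
  assumes "0 \<le> x" "s < ennreal x" "ennreal x < T" "x < n" "0 < \<delta>"
  shows "\<exists>r\<in>{q\<in>\<rat>. 0 \<le> q \<and> q \<le> n \<and> s < ennreal q \<and> ennreal q < T}. x < r \<and> r < x + \<delta>"
proof -
  obtain c where c: "x < c" "c \<le> x + \<delta>" "c \<le> n" "ennreal c \<le> T"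
  proof (cases T rule: ennreal_cases)
    case (real t)
    then have "x < t" using assms by (auto simp: ennreal_less_iff)
    then show ?thesis
      using that[of "min (x + \<delta>) (min n t)"] assms real by (auto simp: ennreal_leI)
  next
    case top
    then show ?thesis using that[of "min (x + \<delta>) n"] assms by auto
  qed
  obtain r where r: "r \<in> \<rat>" "x < r" "r < c" using Rats_dense_in_real[OF c(1)] by blast
  have "ennreal x \<le> ennreal r" "ennreal r < ennreal c"
    using r assms by (auto simp: ennreal_lessI)
  then have "s < ennreal r" "ennreal r < T"
    using assms c(4) by (auto intro: less_le_trans)
  then show ?thesis using r c assms by (auto intro!: bexI[of _ r])
qed

lemma finite_variation_on_stoch_interval_of_rationals:
  fixes f :: "real \<Rightarrow> real" and s T :: ennreal
  assumes "cadlag f" "u < n"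
    and bound: "\<And>ys. sorted ys \<Longrightarrow> set ys \<subseteq> {q\<in>\<rat>. 0 \<le> q \<and> q \<le> n \<and> s < ennreal q \<and> ennreal q < T} \<Longrightarrow>
      variation_sum f ys \<le> V"
  shows "finite_variation_on f ({t. 0 \<le> t \<and> s < ennreal t \<and> ennreal t \<le> T} \<inter> {0..u})"
proof -
  define J where "J = {t. 0 \<le> t \<and> s < ennreal t \<and> ennreal t < T \<and> t \<le> u}"
  have dense: "\<exists>r\<in>{q\<in>\<rat>. 0 \<le> q \<and> q \<le> n \<and> s < ennreal q \<and> ennreal q < T}. x < r \<and> r < x + \<delta>"
    if "x \<in> J" "0 < \<delta>" for x \<delta>
    using rat_between_in_stoch_interval[of x s T n \<delta>] that \<open>u < n\<close> by (auto simp: J_def)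
  have right_cont: "\<And>x. 0 \<le> x \<Longrightarrow> (f \<longlongrightarrow> f x) (at_right x)"
    using \<open>cadlag f\<close> unfolding cadlag_def by auto
  have fv_J: "finite_variation_on f J"
    unfolding finite_variation_on_iff_variation_sum
  proof (intro exI allI impI)
    fix xs assume "sorted xs" "set xs \<subseteq> J"
    moreover have "\<And>x. x \<in> J \<Longrightarrow> (f \<longlongrightarrow> f x) (at_right x)" using right_cont by (simp add: J_def)
    ultimately show "variation_sum f xs \<le> V"
      using variation_sum_le_of_right_dense[OF _ dense bound] by blast
  qed
  show ?thesis
  proof (cases "\<exists>t. T = ennreal t \<and> 0 \<le> t \<and> t \<le> u \<and> s < ennreal t")
    case True
    then obtain t where t: "T = ennreal t" "0 \<le> t" "t \<le> u" "s < ennreal t" by blast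
    then obtain a where a: "s = ennreal a" "0 \<le> a" "a < t"
      by (cases s rule: ennreal_cases) (auto simp: ennreal_less_iff)
    obtain L where "(f \<longlongrightarrow> L) (at_left t)"
      using \<open>cadlag f\<close> a unfolding cadlag_def by force
    moreover have "J \<subseteq> {..<t}" "{a<..<t} \<subseteq> J"
      using t a by (auto simp: J_def ennreal_less_iff)
    ultimately have "finite_variation_on f (insert t J)"
      using finite_variation_on_insert_left_limit[OF fv_J _ _ _ \<open>a < t\<close>] by blast
    moreover have "{t. 0 \<le> t \<and> s < ennreal t \<and> ennreal t \<le> T} \<inter> {0..u} \<subseteq> insert t J"
      using t by (auto simp: J_def ennreal_less_iff ennreal_le_iff2)
    ultimately show ?thesis by (rule finite_variation_on_subset)
  next
    case False
    have "ennreal t < T" if "0 \<le> t" "s < ennreal t" "ennreal t \<le> T" "t \<le> u" for t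
    proof (cases T rule: ennreal_cases)
      case (real r)
      with False that have "\<not> r \<le> t" by auto
      with real show ?thesis using that(1) ennreal_lessI[of r t] by auto
    qed simp
    then show ?thesis by (intro finite_variation_on_subset[OF fv_J]) (auto simp: J_def)
  qed
qed

lemma finite_variation_on_stoch_interval_of_quotient:
  fixes f a1 a2 b :: "real \<Rightarrow> real" and s T :: ennreal and n :: real
  defines "R \<equiv> {q\<in>\<rat>. 0 \<le> q \<and> q \<le> n \<and> s < ennreal q \<and> ennreal q < T}"
  assumes "cadlag f" "u < n" "0 < e" "0 \<le> c1" "0 \<le> c2" "0 \<le> c3"
    and quotient: "\<And>q. q \<in> R \<Longrightarrow> f q * b q = a1 q - a2 q"
    and antimono: "\<And>q q'. q \<in> R \<Longrightarrow> q' \<in> R \<Longrightarrow> q \<le> q' \<Longrightarrow>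
      a1 q' \<le> a1 q \<and> a2 q' \<le> a2 q \<and> b q' \<le> b q"
    and range: "\<And>q. q \<in> R \<Longrightarrow>
      0 \<le> a1 q \<and> a1 q \<le> c1 \<and> 0 \<le> a2 q \<and> a2 q \<le> c2 \<and> e \<le> b q \<and> b q \<le> c3"
  shows "finite_variation_on f ({t. 0 \<le> t \<and> s < ennreal t \<and> ennreal t \<le> T} \<inter> {0..u})"
proof (rule finite_variation_on_stoch_interval_of_rationals[OF \<open>cadlag f\<close> \<open>u < n\<close>])
  fix ys assume "sorted ys" "set ys \<subseteq> {q\<in>\<rat>. 0 \<le> q \<and> q \<le> n \<and> s < ennreal q \<and> ennreal q < T}"
  then have "sorted ys" "set ys \<subseteq> R" unfolding R_def .
  then show "variation_sum f ys \<le> c1 / e + c2 / e + (c1 + c2) / e\<^sup>2 * c3"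
  proof (rule variation_sum_quotient_le[OF _ _ assms(4-7) _ antimono range])
    fix q assume "q \<in> R"
    then have "0 < b q" using range[of q] \<open>0 < e\<close> by auto
    then show "f q = (a1 q - a2 q) / b q" using quotient[OF \<open>q \<in> R\<close>] by (simp add: field_simps)
  qed
qed

section \<open>Conditioning across a local jump\<close>

lemma sigma_finite_subalgebra_of_prob_space:
  "prob_space M \<Longrightarrow> subalgebra M N \<Longrightarrow> sigma_finite_subalgebra M N"
  by (rule finite_measure_subalgebra_is_sigma_finite)
    (simp add: finite_measure_subalgebra_def finite_measure_subalgebra_axioms_def prob_space.finite_measure)

context sigma_finite_subalgebra
begin

lemma real_cond_exp_nonneg_countable:
  assumes "countable Q" and "\<And>q. q \<in> Q \<Longrightarrow> integrable M (g q)"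
    and "\<And>q x. q \<in> Q \<Longrightarrow> x \<in> space M \<Longrightarrow> 0 \<le> g q x"
  shows "AE x in M. \<forall>q\<in>Q. 0 \<le> real_cond_exp M F (g q) x"
  unfolding AE_ball_countable[OF \<open>countable Q\<close>] using assms by (auto intro!: real_cond_exp_pos)

lemma real_cond_exp_antitone_countable:
  fixes g :: "'b :: linorder \<Rightarrow> 'a \<Rightarrow> real"
  assumes "countable Q" and "\<And>q. q \<in> Q \<Longrightarrow> integrable M (g q)"
    and "\<And>q q' x. q \<in> Q \<Longrightarrow> q' \<in> Q \<Longrightarrow> q \<le> q' \<Longrightarrow> x \<in> space M \<Longrightarrow> g q' x \<le> g q x"
  shows "AE x in M. \<forall>q\<in>Q. \<forall>q'\<in>Q. q \<le> q' \<longrightarrow> real_cond_exp M F (g q') x \<le> real_cond_exp M F (g q) x"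
  unfolding AE_ball_countable[OF \<open>countable Q\<close>]
proof (intro ballI)
  fix q q' assume "q \<in> Q" "q' \<in> Q"
  show "AE x in M. q \<le> q' \<longrightarrow> real_cond_exp M F (g q') x \<le> real_cond_exp M F (g q) x"
  proof (cases "q \<le> q'")
    case True
    then have "AE x in M. real_cond_exp M F (g q') x \<le> real_cond_exp M F (g q) x"
      using assms \<open>q \<in> Q\<close> \<open>q' \<in> Q\<close> by (intro real_cond_exp_mono) auto
    then show ?thesis by eventually_elim simp
  qed simp
qed

end

locale jumping_filtration = prob_space M for M :: "'a measure" +
  fixes F :: "real \<Rightarrow> 'a measure" and S T :: "'a \<Rightarrow> ennreal"
  assumes usual: "usual_hypotheses M F"
    and stopping_S: "is_stopping_time M F S" and stopping_T: "is_stopping_time M F T"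
    and jumps: "jumps_locally M F S T"
begin

lemma subalgebra_F: "0 \<le> t \<Longrightarrow> subalgebra M (F t)"
  using usual unfolding usual_hypotheses_def filtration_on_def by blast

lemma sets_F_mono: "0 \<le> s \<Longrightarrow> s \<le> t \<Longrightarrow> sets (F s) \<subseteq> sets (F t)"
  using usual unfolding usual_hypotheses_def filtration_on_def by blast

lemma sets_F_subset: "0 \<le> t \<Longrightarrow> A \<in> sets (F t) \<Longrightarrow> A \<in> sets M"
  using subalgebra_F unfolding subalgebra_def by auto

lemma space_F: "0 \<le> t \<Longrightarrow> space (F t) = space M"
  using subalgebra_F unfolding subalgebra_def by auto

lemma sigma_finite_subalgebra_F: "0 \<le> t \<Longrightarrow> sigma_finite_subalgebra M (F t)"
  by (rule sigma_finite_subalgebra_of_prob_space[OF prob_space_axioms subalgebra_F])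

lemma integrable_indicator_of_sets: "A \<in> sets M \<Longrightarrow> integrable M (indicator A :: 'a \<Rightarrow> real)"
  by (simp add: emeasure_eq_measure)

definition S_le :: "real \<Rightarrow> 'a set" where "S_le t = {\<omega>\<in>space M. S \<omega> \<le> ennreal t}"
definition T_gt :: "real \<Rightarrow> 'a set" where "T_gt t = {\<omega>\<in>space M. ennreal t < T \<omega>}"
definition jump_window :: "real \<Rightarrow> 'a set" where
  "jump_window t = {\<omega>\<in>space M. S \<omega> \<le> ennreal t \<and> ennreal t < T \<omega>}"

lemma jump_window_eq: "jump_window t = S_le t \<inter> T_gt t"
  unfolding jump_window_def S_le_def T_gt_def by auto

lemma S_le_in_F: "0 \<le> t \<Longrightarrow> S_le t \<in> sets (F t)"
  using stopping_S unfolding is_stopping_time_def S_le_def by auto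

lemma T_gt_in_F: "0 \<le> t \<Longrightarrow> T_gt t \<in> sets (F t)"
proof -
  assume "0 \<le> t"
  then have "T_gt t = space (F t) - {\<omega>\<in>space M. T \<omega> \<le> ennreal t}"
    unfolding T_gt_def using space_F by auto
  also have "\<dots> \<in> sets (F t)" using stopping_T \<open>0 \<le> t\<close> unfolding is_stopping_time_def by auto
  finally show ?thesis .
qed

lemma T_gt_in_sets: "0 \<le> t \<Longrightarrow> T_gt t \<in> sets M"
  using sets_F_subset T_gt_in_F by blast

lemma jump_window_in_sets: "0 \<le> t \<Longrightarrow> jump_window t \<in> sets M"
  unfolding jump_window_eq using S_le_in_F T_gt_in_F sets_F_subset by blast

lemma T_gt_antimono: "q \<le> q' \<Longrightarrow> T_gt q' \<subseteq> T_gt q"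
  unfolding T_gt_def by (auto intro: le_less_trans[OF ennreal_leI])

lemma sigma_algebra_sets_at_S: "sigma_algebra (space M) (sets_at_stopping_time M F S)"
  unfolding sigma_algebra_iff2
proof (intro conjI allI ballI impI)
  show "sets_at_stopping_time M F S \<subseteq> Pow (space M)"
    unfolding sets_at_stopping_time_def using sets.sets_into_space by auto
  show "{} \<in> sets_at_stopping_time M F S" unfolding sets_at_stopping_time_def by auto
next
  fix A assume A: "A \<in> sets_at_stopping_time M F S"
  show "space M - A \<in> sets_at_stopping_time M F S" unfolding sets_at_stopping_time_def
  proof (intro CollectI conjI allI impI)
    show "space M - A \<in> sets M" using A unfolding sets_at_stopping_time_def by auto
    fix t :: real assume "0 \<le> t"
    have "(space M - A) \<inter> S_le t = S_le t - A \<inter> S_le t" unfolding S_le_def by auto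
    also have "\<dots> \<in> sets (F t)"
      using A \<open>0 \<le> t\<close> S_le_in_F unfolding sets_at_stopping_time_def S_le_def by auto
    finally show "(space M - A) \<inter> {\<omega>\<in>space M. S \<omega> \<le> ennreal t} \<in> sets (F t)"
      unfolding S_le_def .
  qed
next
  fix A :: "nat \<Rightarrow> 'a set" assume A: "range A \<subseteq> sets_at_stopping_time M F S"
  show "\<Union> (range A) \<in> sets_at_stopping_time M F S" unfolding sets_at_stopping_time_def
  proof (intro CollectI conjI allI impI)
    show "\<Union> (range A) \<in> sets M" using A unfolding sets_at_stopping_time_def by auto
    fix t :: real assume "0 \<le> t"
    have "\<Union> (range A) \<inter> S_le t = (\<Union>i. A i \<inter> S_le t)" by auto
    also have "\<dots> \<in> sets (F t)"
      using A \<open>0 \<le> t\<close> unfolding sets_at_stopping_time_def S_le_def by (intro sets.countable_UN) auto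
    finally show "\<Union> (range A) \<inter> {\<omega>\<in>space M. S \<omega> \<le> ennreal t} \<in> sets (F t)"
      unfolding S_le_def .
  qed
qed

definition F_S :: "'a measure" where "F_S = sigma (space M) (sets_at_stopping_time M F S)"

lemma sets_F_S: "sets F_S = sets_at_stopping_time M F S"
  unfolding F_S_def using sigma_algebra.sets_measure_of_eq[OF sigma_algebra_sets_at_S] by simp

lemma space_F_S: "space F_S = space M"
  unfolding F_S_def by (simp add: space_measure_of_conv)

lemma subalgebra_F_S: "subalgebra M F_S"
  unfolding subalgebra_def space_F_S sets_F_S sets_at_stopping_time_def by auto

lemma sigma_finite_subalgebra_F_S: "sigma_finite_subalgebra M F_S"
  by (rule sigma_finite_subalgebra_of_prob_space[OF prob_space_axioms subalgebra_F_S])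

lemma sets_F_S_subset: "A \<in> sets F_S \<Longrightarrow> A \<in> sets M"
  using subalgebra_F_S unfolding subalgebra_def by auto

lemma S_le_in_F_S: "0 \<le> t \<Longrightarrow> S_le t \<in> sets F_S"
  unfolding sets_F_S sets_at_stopping_time_def
proof (intro CollectI conjI allI impI)
  assume "0 \<le> t"
  then show "S_le t \<in> sets M" using sets_F_subset S_le_in_F by blast
  fix r :: real assume "0 \<le> r"
  have "S_le t \<inter> {\<omega>\<in>space M. S \<omega> \<le> ennreal r} = S_le (min t r)"
    unfolding S_le_def using \<open>0 \<le> t\<close> \<open>0 \<le> r\<close> by (auto simp: min_def intro: order_trans[OF _ ennreal_leI])
  also have "\<dots> \<in> sets (F r)"
    using sets_F_mono[of "min t r" r] S_le_in_F[of "min t r"] \<open>0 \<le> t\<close> \<open>0 \<le> r\<close> by auto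
  finally show "S_le t \<inter> {\<omega>\<in>space M. S \<omega> \<le> ennreal r} \<in> sets (F r)" .
qed

lemma borel_measurable_indicator_S_le_times:
  assumes "0 \<le> t" and h: "h \<in> borel_measurable F_S"
  shows "(\<lambda>\<omega>. indicator (S_le t) \<omega> * h \<omega> :: real) \<in> borel_measurable (F t)"
  unfolding borel_measurable_iff_le
proof
  fix a :: real
  have "{\<omega>\<in>space F_S. h \<omega> \<le> a} \<in> sets F_S" using h unfolding borel_measurable_iff_le by blast
  then have "{\<omega>\<in>space F_S. h \<omega> \<le> a} \<inter> S_le t \<in> sets (F t)"
    unfolding sets_F_S sets_at_stopping_time_def S_le_def using \<open>0 \<le> t\<close> by auto
  moreover have "space (F t) - S_le t \<in> sets (F t)" using S_le_in_F[OF \<open>0 \<le> t\<close>] by auto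
  moreover have "{\<omega>\<in>space (F t). indicator (S_le t) \<omega> * h \<omega> \<le> a}
      = ({\<omega>\<in>space F_S. h \<omega> \<le> a} \<inter> S_le t) \<union> (if 0 \<le> a then space (F t) - S_le t else {})"
    unfolding space_F[OF \<open>0 \<le> t\<close>] space_F_S S_le_def by (auto simp: indicator_def)
  ultimately show "{\<omega>\<in>space (F t). indicator (S_le t) \<omega> * h \<omega> \<le> a} \<in> sets (F t)"
    by (cases "0 \<le> a") auto
qed

lemma jump_window_trace:
  assumes "0 \<le> t" "A \<in> sets (F t)"
  obtains B where "B \<in> sets F_S" "B \<subseteq> S_le t" "A \<inter> jump_window t = B \<inter> T_gt t"
proof -
  have "A \<inter> jump_window t \<in> trace_sets (sets (F t)) (jump_window t)"
    unfolding trace_sets_def using assms by auto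
  also have "trace_sets (sets (F t)) (jump_window t) = trace_sets (sets F_S) (jump_window t)"
    using jumps \<open>0 \<le> t\<close> unfolding jumps_locally_def jump_window_def sets_F_S by blast
  finally obtain B0 where "B0 \<in> sets F_S" "A \<inter> jump_window t = B0 \<inter> jump_window t"
    unfolding trace_sets_def by auto
  moreover have "B0 \<inter> S_le t \<in> sets F_S" using calculation(1) S_le_in_F_S[OF \<open>0 \<le> t\<close>] by auto
  ultimately show ?thesis using that[of "B0 \<inter> S_le t"] unfolding jump_window_eq by auto
qed

definition cond_survival :: "real \<Rightarrow> 'a \<Rightarrow> real" where
  "cond_survival t = real_cond_exp M F_S (indicator (T_gt t))"

lemma cond_survival_bounds:
  assumes "0 \<le> t"
  shows "AE \<omega> in M. 0 \<le> cond_survival t \<omega> \<and> cond_survival t \<omega> \<le> 1"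
proof -
  have int: "integrable M (indicator (T_gt t) :: 'a \<Rightarrow> real)"
    using integrable_indicator_of_sets T_gt_in_sets \<open>0 \<le> t\<close> by blast
  have "AE \<omega> in M. 0 \<le> cond_survival t \<omega>" unfolding cond_survival_def
    by (rule sigma_finite_subalgebra.real_cond_exp_ge_c[OF sigma_finite_subalgebra_F_S int]) auto
  moreover have "AE \<omega> in M. cond_survival t \<omega> \<le> 1" unfolding cond_survival_def
    by (rule sigma_finite_subalgebra.real_cond_exp_le_c[OF sigma_finite_subalgebra_F_S int])
      (auto simp: indicator_def)
  ultimately show ?thesis by eventually_elim auto
qed

text \<open>The weight \<open>1\<^sub>B \<cdot> cond_survival t \<cdot> 1\<^bsub>T > t\<^esub>\<close> is \<open>F t\<close>-measurable because \<open>B\<close> lies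
  before \<open>t\<close>, so it can be moved through both \<open>E[\<cdot> | F t]\<close> and \<open>E[\<cdot> | F_S]\<close>.\<close>
lemma integral_cond_exp_mult_cond_survival:
  assumes "0 \<le> t" and Y: "integrable M Y" and B: "B \<in> sets F_S" "B \<subseteq> S_le t"
  defines "N \<equiv> real_cond_exp M F_S (\<lambda>\<omega>. Y \<omega> * indicator (T_gt t) \<omega>)"
  shows "(\<integral>\<omega>. indicator (B \<inter> T_gt t) \<omega> * (real_cond_exp M (F t) Y \<omega> * cond_survival t \<omega>) \<partial>M)
       = (\<integral>\<omega>. indicator (B \<inter> T_gt t) \<omega> * N \<omega> \<partial>M)"
proof -
  define D where "D = cond_survival t"
  define g where "g \<omega> = indicator B \<omega> * D \<omega> * indicator (T_gt t) \<omega>" for \<omega>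
  have T_gt: "T_gt t \<in> sets M" using T_gt_in_sets[OF \<open>0 \<le> t\<close>] .
  have Y_T_int: "integrable M (\<lambda>\<omega>. Y \<omega> * indicator (T_gt t) \<omega>)"
    by (rule integrable_real_mult_indicator[OF T_gt Y])
  have BD: "(\<lambda>\<omega>. indicator B \<omega> * D \<omega>) \<in> borel_measurable F_S"
    using B(1) by (simp add: D_def cond_survival_def)
  have BN: "(\<lambda>\<omega>. indicator B \<omega> * N \<omega>) \<in> borel_measurable F_S"
    using B(1) by (simp add: N_def)
  have "g = (\<lambda>\<omega>. indicator (T_gt t) \<omega> * (indicator (S_le t) \<omega> * (indicator B \<omega> * D \<omega>)))"
    using B(2) by (auto simp: g_def indicator_def fun_eq_iff)
  then have g_F: "g \<in> borel_measurable (F t)"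
    using T_gt_in_F[OF \<open>0 \<le> t\<close>] borel_measurable_indicator_S_le_times[OF \<open>0 \<le> t\<close> BD] by simp
  have "AE \<omega> in M. \<bar>g \<omega>\<bar> \<le> 1"
    using cond_survival_bounds[OF \<open>0 \<le> t\<close>] by eventually_elim (auto simp: g_def D_def indicator_def)
  then have gY_int: "integrable M (\<lambda>\<omega>. g \<omega> * Y \<omega>)"
    using measurable_from_subalg[OF subalgebra_F[OF \<open>0 \<le> t\<close>] g_F] Y
    by (intro Bochner_Integration.integrable_bound[OF Y])
      (auto elim!: eventually_mono simp: abs_mult intro: mult_left_le_one_le)
  have N_int: "integrable M N"
    unfolding N_def by (rule sigma_finite_subalgebra.real_cond_exp_int(1)[OF sigma_finite_subalgebra_F_S Y_T_int])
  have "(\<integral>\<omega>. indicator (B \<inter> T_gt t) \<omega> * (real_cond_exp M (F t) Y \<omega> * cond_survival t \<omega>) \<partial>M)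
      = (\<integral>\<omega>. g \<omega> * real_cond_exp M (F t) Y \<omega> \<partial>M)"
    by (simp add: g_def D_def indicator_inter_arith mult_ac)
  also have "\<dots> = (\<integral>\<omega>. g \<omega> * Y \<omega> \<partial>M)"
    using Y gY_int g_F
    by (intro sigma_finite_subalgebra.real_cond_exp_intg(2)[OF sigma_finite_subalgebra_F[OF \<open>0 \<le> t\<close>]]) auto
  also have "\<dots> = (\<integral>\<omega>. (indicator B \<omega> * D \<omega>) * (Y \<omega> * indicator (T_gt t) \<omega>) \<partial>M)"
    by (simp add: g_def mult_ac)
  also have "\<dots> = (\<integral>\<omega>. (indicator B \<omega> * D \<omega>) * N \<omega> \<partial>M)"
    unfolding N_def using gY_int Y_T_int BD
    by (intro sigma_finite_subalgebra.real_cond_exp_intg(2)[OF sigma_finite_subalgebra_F_S, symmetric])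
      (auto simp: g_def mult_ac)
  also have "\<dots> = (\<integral>\<omega>. (indicator B \<omega> * N \<omega>) * D \<omega> \<partial>M)" by (simp add: mult_ac)
  also have "\<dots> = (\<integral>\<omega>. (indicator B \<omega> * N \<omega>) * indicator (T_gt t) \<omega> \<partial>M)"
  proof -
    have "integrable M (\<lambda>\<omega>. (indicator B \<omega> * N \<omega>) * indicator (T_gt t) \<omega>)"
      using N_int sets_F_S_subset[OF B(1)] T_gt
      by (intro Bochner_Integration.integrable_bound[OF N_int]) (auto simp: indicator_def N_def)
    then show ?thesis
      unfolding D_def cond_survival_def using BN T_gt
      by (intro sigma_finite_subalgebra.real_cond_exp_intg(2)[OF sigma_finite_subalgebra_F_S]) auto
  qed
  also have "\<dots> = (\<integral>\<omega>. indicator (B \<inter> T_gt t) \<omega> * N \<omega> \<partial>M)"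
    by (simp add: indicator_inter_arith mult_ac)
  finally show ?thesis .
qed

lemma cond_exp_mult_cond_survival:
  assumes "0 \<le> t" and Y: "integrable M Y"
  shows "AE \<omega> in M. \<omega> \<in> jump_window t \<longrightarrow>
    real_cond_exp M (F t) Y \<omega> * cond_survival t \<omega> = real_cond_exp M F_S (\<lambda>\<omega>. Y \<omega> * indicator (T_gt t) \<omega>) \<omega>"
proof -
  interpret Ft: sigma_finite_subalgebra M "F t" by (rule sigma_finite_subalgebra_F[OF \<open>0 \<le> t\<close>])
  define ce where "ce = real_cond_exp M (F t) Y"
  define N where "N = real_cond_exp M F_S (\<lambda>\<omega>. Y \<omega> * indicator (T_gt t) \<omega>)"
  define f1 where "f1 \<omega> = indicator (jump_window t) \<omega> * (ce \<omega> * cond_survival t \<omega>)" for \<omega>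
  define f2 where "f2 \<omega> = indicator (jump_window t) \<omega> * N \<omega>" for \<omega>
  have T_gt: "T_gt t \<in> sets M" using T_gt_in_sets[OF \<open>0 \<le> t\<close>] .
  have window: "indicator (jump_window t) \<omega> * h = indicator (T_gt t) \<omega> * (indicator (S_le t) \<omega> * h)"
    for \<omega> and h :: real by (simp add: jump_window_eq indicator_inter_arith mult_ac)
  have "f1 = (\<lambda>\<omega>. (indicator (T_gt t) \<omega> * ce \<omega>) * (indicator (S_le t) \<omega> * cond_survival t \<omega>))"
    unfolding f1_def window by (simp add: fun_eq_iff mult_ac)
  then have f1_F: "f1 \<in> borel_measurable (F t)"
    using T_gt_in_F[OF \<open>0 \<le> t\<close>] borel_measurable_indicator_S_le_times[OF \<open>0 \<le> t\<close>, of "cond_survival t"]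
    by (simp add: ce_def cond_survival_def)
  have f2_F: "f2 \<in> borel_measurable (F t)"
    unfolding f2_def window
    using T_gt_in_F[OF \<open>0 \<le> t\<close>] borel_measurable_indicator_S_le_times[OF \<open>0 \<le> t\<close>, of N]
    by (simp add: N_def)
  have f1_M: "f1 \<in> borel_measurable M" and f2_M: "f2 \<in> borel_measurable M"
    using f1_F f2_F measurable_from_subalg[OF subalgebra_F[OF \<open>0 \<le> t\<close>]] by blast+
  have f1_int: "integrable M f1"
  proof (rule Bochner_Integration.integrable_bound[OF _ f1_M])
    show "integrable M ce" unfolding ce_def using Y by blast
    show "AE \<omega> in M. norm (f1 \<omega>) \<le> norm (ce \<omega>)"
      using cond_survival_bounds[OF \<open>0 \<le> t\<close>]
      by eventually_elim (auto simp: f1_def abs_mult indicator_def intro: mult_right_le_one_le)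
  qed
  have f2_int: "integrable M f2"
  proof (rule Bochner_Integration.integrable_bound[OF _ f2_M])
    show "integrable M N" unfolding N_def
      using integrable_real_mult_indicator[OF T_gt Y] sigma_finite_subalgebra.real_cond_exp_int(1)[OF sigma_finite_subalgebra_F_S] by blast
  qed (auto simp: f2_def indicator_def)
  have "(\<integral>\<omega>\<in>A. f1 \<omega> \<partial>M) = (\<integral>\<omega>\<in>A. f2 \<omega> \<partial>M)" if A: "A \<in> sets (F t)" for A
  proof -
    obtain B where B: "B \<in> sets F_S" "B \<subseteq> S_le t" "A \<inter> jump_window t = B \<inter> T_gt t"
      using jump_window_trace[OF \<open>0 \<le> t\<close> A] .
    have "indicator A \<omega> * indicator (jump_window t) \<omega> = (indicator (B \<inter> T_gt t) \<omega> :: real)" for \<omega>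
      by (metis B(3) indicator_inter_arith)
    then show ?thesis
      using integral_cond_exp_mult_cond_survival[OF \<open>0 \<le> t\<close> Y B(1,2)]
      by (simp add: set_lebesgue_integral_def f1_def f2_def ce_def N_def mult.assoc[symmetric])
  qed
  then have "AE \<omega> in M. real_cond_exp M (F t) f1 \<omega> = f2 \<omega>"
    using f1_int f2_int f2_F by (intro Ft.real_cond_exp_charact)
  moreover have "AE \<omega> in M. real_cond_exp M (F t) f1 \<omega> = f1 \<omega>"
    using f1_int f1_F by (rule Ft.real_cond_exp_F_meas)
  ultimately show ?thesis by eventually_elim (auto simp: f1_def f2_def ce_def N_def)
qed

lemma cond_exp_diff_mult_cond_survival:
  assumes "0 \<le> t" and P: "integrable M P" and Q: "integrable M Q"
  shows "AE \<omega> in M. \<omega> \<in> jump_window t \<longrightarrow>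
    real_cond_exp M (F t) (\<lambda>\<omega>. P \<omega> - Q \<omega>) \<omega> * cond_survival t \<omega> =
      real_cond_exp M F_S (\<lambda>\<omega>. P \<omega> * indicator (T_gt t) \<omega>) \<omega> -
      real_cond_exp M F_S (\<lambda>\<omega>. Q \<omega> * indicator (T_gt t) \<omega>) \<omega>"
proof -
  have T_gt: "T_gt t \<in> sets M" using T_gt_in_sets[OF \<open>0 \<le> t\<close>] .
  have "AE \<omega> in M. real_cond_exp M F_S (\<lambda>\<omega>. (P \<omega> - Q \<omega>) * indicator (T_gt t) \<omega>) \<omega> =
      real_cond_exp M F_S (\<lambda>\<omega>. P \<omega> * indicator (T_gt t) \<omega>) \<omega> -
      real_cond_exp M F_S (\<lambda>\<omega>. Q \<omega> * indicator (T_gt t) \<omega>) \<omega>"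
    using sigma_finite_subalgebra.real_cond_exp_diff[OF sigma_finite_subalgebra_F_S
        integrable_real_mult_indicator[OF T_gt P] integrable_real_mult_indicator[OF T_gt Q]]
    by (simp add: left_diff_distrib)
  moreover have "integrable M (\<lambda>\<omega>. P \<omega> - Q \<omega>)" using P Q by auto
  note cond_exp_mult_cond_survival[OF \<open>0 \<le> t\<close> this]
  ultimately show ?thesis by eventually_elim auto
qed

lemma measure_inter_T_gt_le:
  assumes "0 \<le> t" and H: "H \<in> sets F_S" and small: "\<And>\<omega>. \<omega> \<in> H \<Longrightarrow> cond_survival t \<omega> \<le> \<epsilon>"
  shows "measure M (H \<inter> T_gt t) \<le> \<epsilon> * measure M H"
proof -
  have H_M: "H \<in> sets M" using sets_F_S_subset[OF H] .
  have T_gt: "T_gt t \<in> sets M" using T_gt_in_sets[OF \<open>0 \<le> t\<close>] .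
  have int: "integrable M (\<lambda>\<omega>. indicator H \<omega> * indicator (T_gt t) \<omega> :: real)"
    using integrable_indicator_of_sets[of "H \<inter> T_gt t"] H_M T_gt
    by (simp add: indicator_inter_arith[symmetric])
  have H_F_S: "(indicator H :: 'a \<Rightarrow> real) \<in> borel_measurable F_S" using H by simp
  have "measure M (H \<inter> T_gt t) = (\<integral>\<omega>. indicator H \<omega> * indicator (T_gt t) \<omega> \<partial>M)"
    using H_M T_gt by (simp add: indicator_inter_arith[symmetric])
  also have "\<dots> = (\<integral>\<omega>. indicator H \<omega> * cond_survival t \<omega> \<partial>M)"
    unfolding cond_survival_def using int H_F_S T_gt
    by (intro sigma_finite_subalgebra.real_cond_exp_intg(2)[OF sigma_finite_subalgebra_F_S, symmetric]) auto
  also have "\<dots> \<le> (\<integral>\<omega>. indicator H \<omega> * \<epsilon> \<partial>M)"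
  proof (rule integral_mono)
    show "integrable M (\<lambda>\<omega>. indicator H \<omega> * cond_survival t \<omega>)"
      unfolding cond_survival_def using int H_F_S T_gt
      by (intro sigma_finite_subalgebra.real_cond_exp_intg(1)[OF sigma_finite_subalgebra_F_S]) auto
    show "integrable M (\<lambda>\<omega>. indicator H \<omega> * \<epsilon>)"
      using integrable_indicator_of_sets[OF H_M] by simp
  qed (auto simp: indicator_def small)
  also have "\<dots> = \<epsilon> * measure M H" using H_M by simp
  finally show ?thesis .
qed

definition low_survival :: "real \<Rightarrow> real set \<Rightarrow> 'a set" where
  "low_survival \<epsilon> Q = {\<omega>\<in>space M. \<exists>q\<in>Q. \<omega> \<in> jump_window q \<and> cond_survival q \<omega> < \<epsilon>}"

lemma low_survival_in_sets:
  assumes "Q \<subseteq> {0..}" "countable Q"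
  shows "low_survival \<epsilon> Q \<in> sets M"
proof -
  have "{\<omega>\<in>space M. cond_survival q \<omega> < \<epsilon>} \<in> sets M" for q
    using borel_measurable_cond_exp[of M F_S] by (simp add: cond_survival_def)
  moreover have "low_survival \<epsilon> Q = (\<Union>q\<in>Q. jump_window q \<inter> {\<omega>\<in>space M. cond_survival q \<omega> < \<epsilon>})"
    unfolding low_survival_def by auto
  ultimately show ?thesis
    using assms jump_window_in_sets by (auto intro!: sets.countable_UN'')
qed

text \<open>Split the event according to the first \<open>q \<in> R\<close> at which the survival probability is
  small after \<open>S\<close>: these pieces are disjoint \<open>F_S\<close>-events, each of which survives \<open>T\<close>
  with probability at most \<open>\<epsilon>\<close>.\<close>
lemma measure_low_survival_finite:
  assumes R: "finite R" "R \<subseteq> {0..}" and "0 \<le> \<epsilon>"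
  shows "measure M (low_survival \<epsilon> R) \<le> \<epsilon>"
proof -
  define L where "L q = S_le q \<inter> {\<omega>\<in>space M. cond_survival q \<omega> < \<epsilon>}" for q
  define H where "H q = L q - (\<Union>q'\<in>{q'\<in>R. q' < q}. L q')" for q
  have L: "L q \<in> sets F_S" if "0 \<le> q" for q
  proof -
    have "{\<omega>\<in>space M. cond_survival q \<omega> < \<epsilon>} \<in> sets F_S"
      using borel_measurable_cond_exp[of M F_S "indicator (T_gt q)"]
      unfolding cond_survival_def borel_measurable_iff_less space_F_S by blast
    then show ?thesis unfolding L_def using S_le_in_F_S[OF that] by auto
  qed
  have H: "H q \<in> sets F_S" if "q \<in> R" for q
    unfolding H_def using that R L by (intro sets.Diff sets.finite_UN) auto
  have H_M: "H q \<in> sets M" if "q \<in> R" for q using sets_F_S_subset[OF H[OF that]] .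
  have disjoint: "disjoint_family_on H R"
    unfolding disjoint_family_on_def
  proof (intro ballI impI)
    fix q1 q2 assume q: "q1 \<in> R" "q2 \<in> R" "q1 \<noteq> q2"
    then consider "q1 < q2" | "q2 < q1" by linarith
    then show "H q1 \<inter> H q2 = {}" unfolding H_def using q by cases blast+
  qed
  have "low_survival \<epsilon> R \<subseteq> (\<Union>q\<in>R. H q \<inter> T_gt q)"
  proof
    fix \<omega> assume "\<omega> \<in> low_survival \<epsilon> R"
    then obtain q where q: "q \<in> R" "\<omega> \<in> jump_window q" "cond_survival q \<omega> < \<epsilon>"
      unfolding low_survival_def by auto
    define K where "K = {q'\<in>R. \<omega> \<in> L q'}"
    have K: "finite K" "q \<in> K" using q R by (auto simp: K_def L_def jump_window_def S_le_def)
    have "Min K \<in> K" "Min K \<le> q" using K by (auto intro: Min_in)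
    moreover have "\<omega> \<in> H (Min K)"
      using \<open>Min K \<in> K\<close> Min_le[OF K(1)] by (force simp: H_def K_def)
    moreover have "\<omega> \<in> T_gt (Min K)"
      using q(2) \<open>Min K \<le> q\<close> T_gt_antimono unfolding jump_window_eq by blast
    ultimately show "\<omega> \<in> (\<Union>q\<in>R. H q \<inter> T_gt q)" by (auto simp: K_def)
  qed
  then have "measure M (low_survival \<epsilon> R) \<le> measure M (\<Union>q\<in>R. H q \<inter> T_gt q)"
    using H_M R T_gt_in_sets by (intro finite_measure_mono sets.finite_UN) auto
  also have "\<dots> \<le> (\<Sum>q\<in>R. measure M (H q \<inter> T_gt q))"
    using H_M R T_gt_in_sets by (intro measure_UNION_le) auto
  also have "\<dots> \<le> (\<Sum>q\<in>R. \<epsilon> * measure M (H q))"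
    using R H by (intro sum_mono measure_inter_T_gt_le) (auto simp: H_def L_def)
  also have "\<dots> = \<epsilon> * measure M (\<Union>q\<in>R. H q)"
    using disjoint H_M R by (subst measure_finite_Union) (auto simp: sum_distrib_left)
  also have "\<dots> \<le> \<epsilon>" using \<open>0 \<le> \<epsilon>\<close> by (simp add: mult_left_le)
  finally show ?thesis .
qed

lemma measure_low_survival:
  assumes Q: "Q \<subseteq> {0..}" "countable Q" and "0 \<le> \<epsilon>"
  shows "measure M (low_survival \<epsilon> Q) \<le> \<epsilon>"
proof (cases "Q = {}")
  case True
  then show ?thesis using \<open>0 \<le> \<epsilon>\<close> by (simp add: low_survival_def)
next
  case False
  define r where "r = from_nat_into Q"
  have range_r: "range r = Q" unfolding r_def using range_from_nat_into[OF False Q(2)] .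
  define E where "E m = low_survival \<epsilon> (r ` {..<m})" for m
  have E: "E m \<in> sets M" for m unfolding E_def using range_r Q by (intro low_survival_in_sets) auto
  have "incseq E" unfolding incseq_def E_def low_survival_def by (auto 4 3)
  moreover have "(\<Union>m. E m) = low_survival \<epsilon> Q"
    unfolding E_def low_survival_def range_r[symmetric] by (auto 4 3)
  ultimately have "emeasure M (low_survival \<epsilon> Q) = (SUP m. emeasure M (E m))"
    using SUP_emeasure_incseq[of E M] E by (metis image_subset_iff)
  also have "\<dots> \<le> ennreal \<epsilon>"
  proof (rule SUP_least)
    fix m
    have "measure M (E m) \<le> \<epsilon>"
      unfolding E_def using range_r Q \<open>0 \<le> \<epsilon>\<close> by (intro measure_low_survival_finite) auto
    then show "emeasure M (E m) \<le> ennreal \<epsilon>" by (simp add: emeasure_eq_measure ennreal_leI)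
  qed
  finally show ?thesis using \<open>0 \<le> \<epsilon>\<close> by (simp add: emeasure_eq_measure)
qed

lemma cond_survival_bounded_below:
  assumes "Q \<subseteq> {0..}" "countable Q"
  shows "AE \<omega> in M. \<exists>e>0. \<forall>q\<in>Q. \<omega> \<in> jump_window q \<longrightarrow> e \<le> cond_survival q \<omega>"
proof -
  define Bad where "Bad = (\<Inter>k. low_survival (1 / real (Suc k)) Q)"
  have sets: "low_survival (1 / real (Suc k)) Q \<in> sets M" for k
    using low_survival_in_sets[OF assms] .
  have small: "measure M Bad \<le> 1 / real (Suc k)" for k
  proof -
    have "measure M Bad \<le> measure M (low_survival (1 / real (Suc k)) Q)"
      unfolding Bad_def using sets by (intro finite_measure_mono) auto
    also have "\<dots> \<le> 1 / real (Suc k)" by (rule measure_low_survival[OF assms]) simp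
    finally show ?thesis .
  qed
  have "measure M Bad = 0"
  proof (rule ccontr)
    assume "measure M Bad \<noteq> 0"
    then have "0 < measure M Bad" using measure_nonneg[of M Bad] by linarith
    then obtain k where "1 / real (Suc k) < measure M Bad"
      using reals_Archimedean[of "measure M Bad"] by (auto simp: inverse_eq_divide)
    then show False using small[of k] by linarith
  qed
  then have "Bad \<in> null_sets M"
    using sets by (auto simp: Bad_def null_sets_def emeasure_eq_measure)
  then show ?thesis
  proof (rule AE_I')
    show "{\<omega>\<in>space M. \<not> (\<exists>e>0. \<forall>q\<in>Q. \<omega> \<in> jump_window q \<longrightarrow> e \<le> cond_survival q \<omega>)} \<subseteq> Bad"
      by (auto simp: Bad_def low_survival_def not_le)
  qed
qed

lemma finite_variation_of_cond_exp_representation: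
  fixes X P Q :: "real \<Rightarrow> 'a \<Rightarrow> real" and n u :: real
  assumes "0 \<le> u" "u < n"
    and int: "\<And>q. 0 \<le> q \<Longrightarrow> q \<le> n \<Longrightarrow> integrable M (P q) \<and> integrable M (Q q)"
    and nonneg: "\<And>q \<omega>. 0 \<le> q \<Longrightarrow> q \<le> n \<Longrightarrow> \<omega> \<in> space M \<Longrightarrow> 0 \<le> P q \<omega> \<and> 0 \<le> Q q \<omega>"
    and antitone: "\<And>q q' \<omega>. 0 \<le> q \<Longrightarrow> q \<le> q' \<Longrightarrow> q' \<le> n \<Longrightarrow> \<omega> \<in> space M \<Longrightarrow>
      P q' \<omega> * indicator (T_gt q') \<omega> \<le> P q \<omega> * indicator (T_gt q) \<omega> \<and>
      Q q' \<omega> * indicator (T_gt q') \<omega> \<le> Q q \<omega> * indicator (T_gt q) \<omega>"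
    and X: "\<And>q. 0 \<le> q \<Longrightarrow> q \<le> n \<Longrightarrow> AE \<omega> in M. X q \<omega> = real_cond_exp M (F q) (\<lambda>\<omega>. P q \<omega> - Q q \<omega>) \<omega>"
    and cadlag: "AE \<omega> in M. cadlag (\<lambda>t. X t \<omega>)"
  shows "AE \<omega> in M. finite_variation_on (\<lambda>t. X t \<omega>) (stoch_interval_oc S T \<omega> \<inter> {0..u})"
proof -
  interpret F_S: sigma_finite_subalgebra M F_S by (rule sigma_finite_subalgebra_F_S)
  define Qn where "Qn = {q\<in>\<rat>. 0 \<le> q \<and> q \<le> n}"
  have Qn: "countable Qn" "\<And>q. q \<in> Qn \<Longrightarrow> 0 \<le> q \<and> q \<le> n" "0 \<in> Qn"
    using \<open>0 \<le> u\<close> \<open>u < n\<close> by (auto simp: Qn_def intro: countable_subset[OF _ countable_rat])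
  define NP where "NP q = real_cond_exp M F_S (\<lambda>\<omega>. P q \<omega> * indicator (T_gt q) \<omega>)" for q
  define NQ where "NQ q = real_cond_exp M F_S (\<lambda>\<omega>. Q q \<omega> * indicator (T_gt q) \<omega>)" for q
  have int_T: "integrable M (\<lambda>\<omega>. P q \<omega> * indicator (T_gt q) \<omega>)"
    "integrable M (\<lambda>\<omega>. Q q \<omega> * indicator (T_gt q) \<omega>)" "integrable M (indicator (T_gt q) :: _ \<Rightarrow> real)"
    if "q \<in> Qn" for q
    using int Qn(2)[OF that] T_gt_in_sets integrable_indicator_of_sets
    by (auto intro: integrable_real_mult_indicator)
  have quotient: "AE \<omega> in M. \<forall>q\<in>Qn. \<omega> \<in> jump_window q \<longrightarrow> X q \<omega> * cond_survival q \<omega> = NP q \<omega> - NQ q \<omega>"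
    unfolding AE_ball_countable[OF Qn(1)]
  proof
    fix q assume "q \<in> Qn"
    then have q: "0 \<le> q" "q \<le> n" using Qn(2) by auto
    have "integrable M (P q)" "integrable M (Q q)" using int[OF q] by auto
    from cond_exp_diff_mult_cond_survival[OF q(1) this] X[OF q]
    show "AE \<omega> in M. \<omega> \<in> jump_window q \<longrightarrow> X q \<omega> * cond_survival q \<omega> = NP q \<omega> - NQ q \<omega>"
      unfolding NP_def NQ_def by eventually_elim auto
  qed
  have "AE \<omega> in M. \<forall>q\<in>Qn. 0 \<le> NP q \<omega>" "AE \<omega> in M. \<forall>q\<in>Qn. 0 \<le> NQ q \<omega>"
    "AE \<omega> in M. \<forall>q\<in>Qn. 0 \<le> cond_survival q \<omega>"
    unfolding NP_def NQ_def cond_survival_def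
    by (rule F_S.real_cond_exp_nonneg_countable[OF Qn(1)]; use int_T nonneg Qn(2) in simp)+
  then have nonneg_N: "AE \<omega> in M. \<forall>q\<in>Qn. 0 \<le> NP q \<omega> \<and> 0 \<le> NQ q \<omega> \<and> 0 \<le> cond_survival q \<omega>"
    by eventually_elim blast
  have "AE \<omega> in M. \<forall>q\<in>Qn. \<forall>q'\<in>Qn. q \<le> q' \<longrightarrow> NP q' \<omega> \<le> NP q \<omega>"
    "AE \<omega> in M. \<forall>q\<in>Qn. \<forall>q'\<in>Qn. q \<le> q' \<longrightarrow> NQ q' \<omega> \<le> NQ q \<omega>"
    "AE \<omega> in M. \<forall>q\<in>Qn. \<forall>q'\<in>Qn. q \<le> q' \<longrightarrow> cond_survival q' \<omega> \<le> cond_survival q \<omega>"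
    unfolding NP_def NQ_def cond_survival_def
    by (rule F_S.real_cond_exp_antitone_countable[OF Qn(1)];
        use int_T antitone Qn(2) T_gt_antimono in \<open>force simp: indicator_def\<close>)+
  then have antitone_N: "AE \<omega> in M. \<forall>q\<in>Qn. \<forall>q'\<in>Qn. q \<le> q' \<longrightarrow>
      NP q' \<omega> \<le> NP q \<omega> \<and> NQ q' \<omega> \<le> NQ q \<omega> \<and> cond_survival q' \<omega> \<le> cond_survival q \<omega>"
    by eventually_elim blast
  have "Qn \<subseteq> {0..}" using Qn(2) by auto
  from quotient nonneg_N antitone_N cond_survival_bounded_below[OF this Qn(1)] cadlag AE_space
  show ?thesis
  proof eventually_elim
    case (elim \<omega>)
    then obtain e where e: "0 < e" "\<And>q. q \<in> Qn \<Longrightarrow> \<omega> \<in> jump_window q \<Longrightarrow> e \<le> cond_survival q \<omega>"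
      by auto
    have R: "q \<in> Qn" "\<omega> \<in> jump_window q"
      if "q \<in> {q\<in>\<rat>. 0 \<le> q \<and> q \<le> n \<and> S \<omega> < ennreal q \<and> ennreal q < T \<omega>}" for q
      using that elim(6) unfolding Qn_def jump_window_def by auto
    have "finite_variation_on (\<lambda>t. X t \<omega>) ({t. 0 \<le> t \<and> S \<omega> < ennreal t \<and> ennreal t \<le> T \<omega>} \<inter> {0..u})"
    proof (rule finite_variation_on_stoch_interval_of_quotient[OF elim(5) \<open>u < n\<close> \<open>0 < e\<close>])
      show "0 \<le> NP 0 \<omega>" "0 \<le> NQ 0 \<omega>" "0 \<le> cond_survival 0 \<omega>" using elim(2) Qn(3) by auto
    next
      fix q assume "q \<in> {q\<in>\<rat>. 0 \<le> q \<and> q \<le> n \<and> S \<omega> < ennreal q \<and> ennreal q < T \<omega>}"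
      from R[OF this] elim(1-3) e Qn(3)
      show "X q \<omega> * cond_survival q \<omega> = NP q \<omega> - NQ q \<omega>"
        and "0 \<le> NP q \<omega> \<and> NP q \<omega> \<le> NP 0 \<omega> \<and> 0 \<le> NQ q \<omega> \<and> NQ q \<omega> \<le> NQ 0 \<omega> \<and>
          e \<le> cond_survival q \<omega> \<and> cond_survival q \<omega> \<le> cond_survival 0 \<omega>"
        using Qn(2) by (blast, meson order_refl)
    next
      fix q q' assume "q \<in> {q\<in>\<rat>. 0 \<le> q \<and> q \<le> n \<and> S \<omega> < ennreal q \<and> ennreal q < T \<omega>}"
        "q' \<in> {q\<in>\<rat>. 0 \<le> q \<and> q \<le> n \<and> S \<omega> < ennreal q \<and> ennreal q < T \<omega>}" "q \<le> q'"
      with R elim(3) show "NP q' \<omega> \<le> NP q \<omega> \<and> NQ q' \<omega> \<le> NQ q \<omega> \<and> cond_survival q' \<omega> \<le> cond_survival q \<omega>"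
        by blast
    qed
    then show ?case unfolding stoch_interval_oc_def .
  qed
qed

lemma fv_on_stoch_interval_of_nat_horizons:
  assumes "\<And>m::nat. AE \<omega> in M. finite_variation_on (\<lambda>t. X t \<omega>) (stoch_interval_oc S T \<omega> \<inter> {0..real m})"
  shows "fv_on_stoch_interval M X S T"
proof -
  from assms have "AE \<omega> in M. \<forall>m::nat. finite_variation_on (\<lambda>t. X t \<omega>) (stoch_interval_oc S T \<omega> \<inter> {0..real m})"
    by (simp add: AE_all_countable)
  then show ?thesis unfolding fv_on_stoch_interval_def
  proof eventually_elim
    case (elim \<omega>)
    show ?case
    proof (intro allI impI)
      fix u :: real
      have "stoch_interval_oc S T \<omega> \<inter> {0..u} \<subseteq> stoch_interval_oc S T \<omega> \<inter> {0..real (nat \<lceil>u\<rceil>)}"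
        by auto linarith
      then show "finite_variation_on (\<lambda>t. X t \<omega>) (stoch_interval_oc S T \<omega> \<inter> {0..u})"
        using elim finite_variation_on_subset by blast
    qed
  qed
qed

lemma martingale_fv_on_stoch_interval:
  assumes mart: "martingale M F X" and cadlag: "AE \<omega> in M. cadlag (\<lambda>t. X t \<omega>)"
  shows "fv_on_stoch_interval M X S T"
proof (rule fv_on_stoch_interval_of_nat_horizons)
  fix m :: nat
  define n where "n = real m + 1"
  have X_n: "integrable M (X n)" using mart unfolding martingale_def n_def by simp
  show "AE \<omega> in M. finite_variation_on (\<lambda>t. X t \<omega>) (stoch_interval_oc S T \<omega> \<inter> {0..real m})"
  proof (rule finite_variation_of_cond_exp_representation
      [where P = "\<lambda>_ \<omega>. max (X n \<omega>) 0" and Q = "\<lambda>_ \<omega>. max (- X n \<omega>) 0" and n = n, OF _ _ _ _ _ _ cadlag])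
    fix q assume q: "0 \<le> q" "q \<le> n"
    have "(\<lambda>\<omega>. max (X n \<omega>) 0 - max (- X n \<omega>) 0) = X n" by (simp add: fun_eq_iff max_def)
    moreover have "AE \<omega> in M. real_cond_exp M (F q) (X n) \<omega> = X q \<omega>"
      using mart q unfolding martingale_def by blast
    ultimately show "AE \<omega> in M. X q \<omega> = real_cond_exp M (F q) (\<lambda>\<omega>. max (X n \<omega>) 0 - max (- X n \<omega>) 0) \<omega>"
      by auto
  next
    fix q q' :: real and \<omega> assume "q \<le> q'"
    then show "max (X n \<omega>) 0 * indicator (T_gt q') \<omega> \<le> max (X n \<omega>) 0 * indicator (T_gt q) \<omega> \<and>
        max (- X n \<omega>) 0 * indicator (T_gt q') \<omega> \<le> max (- X n \<omega>) 0 * indicator (T_gt q) \<omega>"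
      using T_gt_antimono[of q q'] by (auto simp: indicator_def)
  qed (use X_n in \<open>auto simp: n_def\<close>)
qed

lemma azema_supermartingale_fv_on_stoch_interval:
  fixes \<tau> :: "'a \<Rightarrow> real"
  assumes \<tau>: "\<tau> \<in> borel_measurable M"
    and Z: "\<forall>t\<ge>0. AE \<omega> in M. Z t \<omega> = real_cond_exp M (F t) (indicator {\<omega>\<in>space M. t < \<tau> \<omega>}) \<omega>"
    and cadlag: "AE \<omega> in M. cadlag (\<lambda>t. Z t \<omega>)"
  shows "fv_on_stoch_interval M Z S T"
proof (rule fv_on_stoch_interval_of_nat_horizons)
  fix m :: nat
  have sets: "{\<omega>\<in>space M. q < \<tau> \<omega>} \<in> sets M" for q using \<tau> by measurable
  show "AE \<omega> in M. finite_variation_on (\<lambda>t. Z t \<omega>) (stoch_interval_oc S T \<omega> \<inter> {0..real m})"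
  proof (rule finite_variation_of_cond_exp_representation
      [where P = "\<lambda>q. indicator {\<omega>\<in>space M. q < \<tau> \<omega>}" and Q = "\<lambda>_ _. 0" and n = "real m + 1",
        OF _ _ _ _ _ _ cadlag])
    fix q q' :: real and \<omega> assume "q \<le> q'"
    then show "indicator {\<omega>\<in>space M. q' < \<tau> \<omega>} \<omega> * indicator (T_gt q') \<omega>
        \<le> indicator {\<omega>\<in>space M. q < \<tau> \<omega>} \<omega> * (indicator (T_gt q) \<omega> :: real) \<and>
        (0::real) * indicator (T_gt q') \<omega> \<le> 0 * indicator (T_gt q) \<omega>"
      using T_gt_antimono[of q q'] by (auto simp: indicator_def)
  qed (use Z integrable_indicator_of_sets[OF sets] in auto)
qed

end

theorem lemma2p1:
  fixes M :: "'a measure" and F :: "real \<Rightarrow> 'a measure" and S T :: "'a \<Rightarrow> ennreal"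
  assumes "prob_space M"
    and "usual_hypotheses M F"
    and "is_stopping_time M F S" and "is_stopping_time M F T"
    and "jumps_locally M F S T"
  shows "(\<forall>X. martingale M F X \<longrightarrow> uniformly_integrable M X \<longrightarrow>
            (AE \<omega> in M. cadlag (\<lambda>t. X t \<omega>)) \<longrightarrow> fv_on_stoch_interval M X S T)
    \<and> (\<forall>(\<tau>::'a \<Rightarrow> real) Z. \<tau> \<in> borel_measurable M \<longrightarrow> (\<forall>\<omega>\<in>space M. 0 < \<tau> \<omega>) \<longrightarrow>
          (\<forall>t\<ge>0. AE \<omega> in M. Z t \<omega> =
               real_cond_exp M (F t) (indicator {\<omega>\<in>space M. t < \<tau> \<omega>}) \<omega>) \<longrightarrow>
          (AE \<omega> in M. cadlag (\<lambda>t. Z t \<omega>)) \<longrightarrow>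
          fv_on_stoch_interval M Z S T)"
proof -
  interpret jumping_filtration M F S T
    using assms by (simp add: jumping_filtration_def jumping_filtration_axioms_def)
  show ?thesis
    using martingale_fv_on_stoch_interval azema_supermartingale_fv_on_stoch_interval by blast
qed

end
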